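(* Let $q$ be a prime power and let $C_1\subseteq\mathbb{F}_q^n$ and $C_2\subseteq\mathbb{F}_q^n$ be linear codes of dimensions $k_1$ and $k_2$ (with minimum distances $d_1,d_2$) such that $C_2^\perp\subseteq C_1$, where $C_2^\perp$ is the dual of $C_2$ with respect to the standard bilinear form on $\mathbb{F}_q^n$. Let $k=k_1+k_2-n$ and let $\mathcal{C}\subseteq(\mathbb{C}^q)^{\otimes n}$ be the associated CSS code. Then there exists a quantum circuit encoding $\mathcal{C}$, i.e. a unitary $U$ on $(\mathbb{C}^q)^{\otimes n}$ together with a set $I\subseteq\{1,\dots,n\}$ of $k$ qudit positions such that $U$ maps the subspace $\mathrm{span}\{|x\rangle : x\in\mathbb{F}_q^n,\ x_j=0 \text{ for all } j\notin I\}$ onto $\mathcal{C}$, which is a product of $n-k_2$ gates $F$, at most $A:=k_1n-\binom{k_1+1}{2}$ gates $\mathrm{ADD}$, and at most $A+(n-1)$ multiplication gates $M_\gamma$.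
   Context: Let $q=p^m$ with $p$ prime, $\omega=\exp(2\pi i/p)$, and for $\alpha\in\mathbb{F}_q$ let $\mathrm{tr}(\alpha)=\sum_{i=0}^{m-1}\alpha^{p^i}\in\mathbb{F}_p$ (identified with $\mathbb{Z}/p\mathbb{Z}$ in exponents of $\omega$). A qudit is $\mathbb{C}^q$ with orthonormal basis $\{|x\rangle: x\in\mathbb{F}_q\}$; $n$ qudits have basis $|x\rangle=|x_1\rangle\otimes\cdots\otimes|x_n\rangle$, $x\in\mathbb{F}_q^n$. Gates (acting on the indicated qudits, identity elsewhere): $M_\gamma=\sum_{y}|\gamma y\rangle\langle y|$ for $\gamma\in\mathbb{F}_q\setminus\{0\}$; $F=\frac{1}{\sqrt q}\sum_{x,z\in\mathbb{F}_q}\omega^{\mathrm{tr}(xz)}|z\rangle\langle x|$; $\mathrm{ADD}^{(a,b)}=\sum_{x,y}|x\rangle_a|x+y\rangle_b\langle y|_b\langle x|_a$ on an ordered pair of distinct qudits $(a,b)$. The CSS code associated with $C_1,C_2$ (with $C_2^\perp\subseteq C_1$) is the subspace of $(\mathbb{C}^q)^{\otimes n}$ spanned by the states $|\psi_w\rangle=|C_2^\perp|^{-1/2}\sum_{c\in C_2^\perp}|c+w\rangle$ for $w\in C_1$; it has dimension $q^{k}$ with $k=k_1+k_2-n$. *)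

theory Defs
  imports "HOL-Analysis.Analysis" "HOL-Library.Function_Algebras"
begin

text \<open>The field F_q is a finite field type 'a; q = CARD('a), p = CHAR('a), q = p^m.\<close>

definition ext_deg :: "'a::{finite,field} itself \<Rightarrow> nat" where
  "ext_deg _ = (THE m. CARD('a) = CHAR('a) ^ m)"

definition trace :: "'a::{finite,field} \<Rightarrow> 'a" where
  "trace \<alpha> = (\<Sum>i<ext_deg TYPE('a). \<alpha> ^ (CHAR('a) ^ i))"

text \<open>tr(alpha) lies in the prime field F_p, identified with Z/pZ = {0..<p}.\<close>
definition tr_nat :: "'a::{finite,field} \<Rightarrow> nat" where
  "tr_nat \<alpha> = (THE j. j < CHAR('a) \<and> of_nat j = trace \<alpha>)"

definition omega :: "'a::{finite,field} itself \<Rightarrow> complex" where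
  "omega _ = exp (2 * of_real pi * \<i> / of_nat CHAR('a))"

definition fscale :: "'a::field \<Rightarrow> ('n \<Rightarrow> 'a) \<Rightarrow> ('n \<Rightarrow> 'a)" where
  "fscale c x = (\<lambda>j. c * x j)"

definition linear_code :: "('n::finite \<Rightarrow> 'a::{finite,field}) set \<Rightarrow> bool" where
  "linear_code C = module.subspace fscale C"

definition code_dim :: "('n::finite \<Rightarrow> 'a::{finite,field}) set \<Rightarrow> nat" where
  "code_dim C = vector_space.dim fscale C"

definition dual_code :: "('n::finite \<Rightarrow> 'a::{finite,field}) set \<Rightarrow> ('n \<Rightarrow> 'a) set" where
  "dual_code C = {x. \<forall>y\<in>C. (\<Sum>j\<in>UNIV. x j * y j) = 0}"

section \<open>Qudit states: vectors in (C^q)^{\<otimes> n} as functions F_q^n \<Rightarrow> C\<close>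

type_synonym ('n, 'a) qstate = "('n \<Rightarrow> 'a) \<Rightarrow> complex"

definition ket :: "('n \<Rightarrow> 'a) \<Rightarrow> ('n, 'a) qstate" where
  "ket x = (\<lambda>y. if y = x then 1 else 0)"

definition cscale :: "complex \<Rightarrow> ('n, 'a) qstate \<Rightarrow> ('n, 'a) qstate" where
  "cscale c \<psi> = (\<lambda>y. c * \<psi> y)"

definition qspan :: "('n, 'a) qstate set \<Rightarrow> ('n, 'a) qstate set" where
  "qspan S = module.span cscale S"

definition qinner :: "('n::finite, 'a::finite) qstate \<Rightarrow> ('n, 'a) qstate \<Rightarrow> complex" where
  "qinner \<psi> \<phi> = (\<Sum>x\<in>UNIV. cnj (\<psi> x) * \<phi> x)"

definition unitary_op :: "(('n::finite, 'a::finite) qstate \<Rightarrow> ('n, 'a) qstate) \<Rightarrow> bool" where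
  "unitary_op U \<longleftrightarrow> (\<forall>\<psi> \<phi>. qinner (U \<psi>) (U \<phi>) = qinner \<psi> \<phi>) \<and> surj U"

definition css_state :: "('n::finite \<Rightarrow> 'a::{finite,field}) set \<Rightarrow> ('n \<Rightarrow> 'a) \<Rightarrow> ('n, 'a) qstate" where
  "css_state C2 w = cscale (1 / complex_of_real (sqrt (real (card (dual_code C2)))))
       (\<Sum>c\<in>dual_code C2. ket (c + w))"

definition css_code :: "('n::finite \<Rightarrow> 'a::{finite,field}) set \<Rightarrow> ('n \<Rightarrow> 'a) set \<Rightarrow> ('n, 'a) qstate set" where
  "css_code C1 C2 = qspan (css_state C2 ` C1)"

datatype ('n, 'a) gate = MulG 'a 'n | FourierG 'n | AddG 'n 'n

text \<open>AddG a b is ADD^(a,b): control a, target b.\<close>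

fun wf_gate :: "('n, 'a::field) gate \<Rightarrow> bool" where
  "wf_gate (MulG \<gamma> a) = (\<gamma> \<noteq> 0)"
| "wf_gate (FourierG a) = True"
| "wf_gate (AddG a b) = (a \<noteq> b)"

fun gate_ket :: "('n, 'a::{finite,field}) gate \<Rightarrow> ('n \<Rightarrow> 'a) \<Rightarrow> ('n, 'a) qstate" where
  "gate_ket (MulG \<gamma> a) x = ket (x(a := \<gamma> * x a))"
| "gate_ket (FourierG a) x =
     (\<Sum>z\<in>UNIV. cscale (omega TYPE('a) ^ tr_nat (x a * z) / complex_of_real (sqrt (real CARD('a))))
                       (ket (x(a := z))))"
| "gate_ket (AddG a b) x = ket (x(b := x a + x b))"

definition apply_gate :: "('n::finite, 'a::{finite,field}) gate \<Rightarrow> ('n, 'a) qstate \<Rightarrow> ('n, 'a) qstate" where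
  "apply_gate g \<psi> = (\<Sum>x\<in>UNIV. cscale (\<psi> x) (gate_ket g x))"

text \<open>A circuit is a list of gates, the head applied first.\<close>
fun circuit_op :: "('n::finite, 'a::{finite,field}) gate list \<Rightarrow> ('n, 'a) qstate \<Rightarrow> ('n, 'a) qstate" where
  "circuit_op [] = id"
| "circuit_op (g # gs) = circuit_op gs \<circ> apply_gate g"

fun is_mul :: "('n, 'a) gate \<Rightarrow> bool" where
  "is_mul (MulG _ _) = True" | "is_mul _ = False"
fun is_fourier :: "('n, 'a) gate \<Rightarrow> bool" where
  "is_fourier (FourierG _) = True" | "is_fourier _ = False"
fun is_add :: "('n, 'a) gate \<Rightarrow> bool" where
  "is_add (AddG _ _) = True" | "is_add _ = False"

end

theory Submission
  imports Defs "HOL-Algebra.Sylow" "HOL-Number_Theory.Cong" "HOL-Computational_Algebra.Polynomial"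
begin

(* Choose an information set of C2: its complement P is an information set of the dual code
   (coordinates outside an information set of C2 can be prescribed freely in the dual and determine
   the rest), and as the dual lies in C1, P extends to an information set S of C1.  The logical
   qudits are I = S - P.  Fourier gates on P turn |b> (b supported on I) into the uniform
   superposition of the |b + a> with a supported on P.  Two layers of ADD and multiplication gates
   then map |b + a> to |w(b) + c(a)>, where w(b) and c(a) are the combinations of the systematic
   generators of C1 (on S) and of the dual code (on P) with coefficients b and a.  As a runs over
   its q^|P| values, c(a) runs once over the dual code, which is the CSS state of w(b).  A generator
   costs one ADD per nonzero coordinate outside its information set, and one multiplication more
   than it has ADDs; summing over the generators gives the bounds. *)

section \<open>Finite fields\<close>

lemma prime_CHAR_finite_field: "prime CHAR('a::{finite,field})"
  by (intro prime_CHAR_semidom finite_imp_CHAR_pos) simp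

lemma CHAR_finite_field_gt_1: "CHAR('a::{finite,field}) > 1"
  using prime_CHAR_finite_field prime_gt_1_nat by blast

lemma of_nat_mod_CHAR: "(of_nat (n mod CHAR('a)) :: 'a::{finite,field}) = of_nat n"
  by (simp add: of_nat_eq_iff_cong_CHAR cong_def)

lemma of_nat_inj_below_CHAR:
  "i < CHAR('a) \<Longrightarrow> j < CHAR('a) \<Longrightarrow> (of_nat i :: 'a::{finite,field}) = of_nat j \<Longrightarrow> i = j"
  by (simp add: of_nat_eq_iff_cong_CHAR cong_def)

lemma range_of_nat_eq_lessThan_CHAR: "range (of_nat :: nat \<Rightarrow> 'a::{finite,field}) = of_nat ` {..<CHAR('a)}"
proof -
  have "(of_nat n :: 'a) \<in> of_nat ` {..<CHAR('a)}" for n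
  proof -
    have "(of_nat n :: 'a) = of_nat (n mod CHAR('a))" "n mod CHAR('a) < CHAR('a)"
      using CHAR_finite_field_gt_1[where 'a='a] by (simp_all add: of_nat_mod_CHAR)
    then show ?thesis by (metis image_eqI lessThan_iff)
  qed
  then show ?thesis by auto
qed

lemma card_range_of_nat: "card (range (of_nat :: nat \<Rightarrow> 'a::{finite,field})) = CHAR('a)"
proof -
  have "inj_on (of_nat :: nat \<Rightarrow> 'a) {..<CHAR('a)}"
    by (rule inj_onI) (auto intro: of_nat_inj_below_CHAR)
  then show ?thesis by (simp add: range_of_nat_eq_lessThan_CHAR card_image)
qed

lemma uminus_of_nat_in_range_of_nat: "- (of_nat j :: 'a::{finite,field}) \<in> range of_nat"
proof -
  have "(of_nat (CHAR('a) - 1) :: 'a) = - 1"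
    using of_nat_diff[of 1 "CHAR('a)"] CHAR_finite_field_gt_1[where 'a='a] by simp
  then have "- (of_nat j :: 'a) = of_nat ((CHAR('a) - 1) * j)" by simp
  then show ?thesis by (metis rangeI)
qed

definition additive_group :: "'a::ab_group_add monoid" where
  "additive_group = \<lparr>carrier = UNIV, monoid.mult = (+), one = 0\<rparr>"

lemma group_additive_group: "group additive_group"
  by (rule groupI) (auto simp: additive_group_def add.assoc simp flip: eq_neg_iff_add_eq_0)

lemma inv_additive_group: "inv\<^bsub>additive_group\<^esub> y = - y"
  by (rule group.inv_equality[OF group_additive_group]) (simp_all add: additive_group_def)

lemma subgroup_multiples:
  "subgroup ((\<lambda>c. c * x) ` range of_nat) (additive_group :: 'a::{finite,field} monoid)"
proof (rule group.subgroupI[OF group_additive_group])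
  show "inv\<^bsub>additive_group\<^esub> a \<in> (\<lambda>c. c * x) ` range of_nat" if a: "a \<in> (\<lambda>c. c * x) ` range of_nat" for a
  proof -
    obtain j where "a = of_nat j * x"
      using a by auto
    moreover obtain i where "- of_nat j = (of_nat i :: 'a)"
      using uminus_of_nat_in_range_of_nat by (metis rangeE)
    ultimately show ?thesis
      by (auto simp: inv_additive_group simp flip: mult_minus_left)
  qed
  show "a \<otimes>\<^bsub>additive_group\<^esub> b \<in> (\<lambda>c. c * x) ` range of_nat"
    if "a \<in> (\<lambda>c. c * x) ` range of_nat" "b \<in> (\<lambda>c. c * x) ` range of_nat" for a b
    using that by (auto simp: additive_group_def simp flip: distrib_right of_nat_add)
qed (auto simp: additive_group_def)

lemma multiples_subset_subgroup:
  assumes "subgroup H additive_group" "x \<in> H"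
  shows "(\<lambda>c. c * x) ` range of_nat \<subseteq> H"
proof -
  have "of_nat j * x \<in> H" for j
    by (induction j)
       (use assms subgroup.m_closed[OF assms(1)] subgroup.one_closed[OF assms(1)] in
        \<open>auto simp: additive_group_def distrib_right\<close>)
  then show ?thesis by auto
qed

text \<open>Cauchy's theorem (via Sylow) yields an additive subgroup \<open>H\<close> of prime order \<open>r\<close>; any
  \<open>x \<noteq> 0\<close> in \<open>H\<close> spans a copy of the prime field inside \<open>H\<close>, so \<open>CHAR('a)\<close> divides \<open>r\<close> by Lagrange.\<close>
lemma prime_dvd_CARD_eq_CHAR:
  assumes "prime r" "r dvd CARD('a::{finite,field})"
  shows "r = CHAR('a)"
proof -
  let ?G = "additive_group :: 'a monoid"
  obtain m where "order ?G = r ^ 1 * m"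
    using assms(2) by (auto simp: order_def additive_group_def)
  from sylow_thm[OF assms(1) group_additive_group this]
  obtain H where H: "subgroup H ?G" "card H = r"
    by auto
  obtain x where x: "x \<in> H" "x \<noteq> 0"
  proof -
    have "\<not> H \<subseteq> {0}"
      using card_mono[of "{0}" H] H(2) prime_gt_1_nat[OF assms(1)] by auto
    then show ?thesis using that by blast
  qed
  define K where "K = (\<lambda>c. c * x) ` range of_nat"
  have "subgroup K (?G\<lparr>carrier := H\<rparr>)"
    unfolding K_def using subgroup_multiples multiples_subset_subgroup[OF H(1) x(1)]
    by (rule group.subgroup_incl[OF group_additive_group _ H(1)])
  then have "card (rcosets\<^bsub>?G\<lparr>carrier := H\<rparr>\<^esub> K) * card K = card H"
    using group.lagrange[OF subgroup.subgroup_is_group[OF H(1) group_additive_group]]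
    by (simp add: order_def)
  then have "card K dvd card H"
    by (metis dvd_triv_right)
  moreover have "card K = CHAR('a)"
    unfolding K_def card_range_of_nat[symmetric]
    by (rule card_image) (use x(2) in \<open>auto intro: inj_onI\<close>)
  ultimately show ?thesis
    using H(2) assms(1) prime_CHAR_finite_field primes_dvd_imp_eq by metis
qed

lemma CARD_eq_CHAR_power: "CARD('a::{finite,field}) = CHAR('a) ^ multiplicity CHAR('a) CARD('a)"
proof -
  let ?p = "CHAR('a)" and ?q = "CARD('a)"
  have "prime_factors ?q \<subseteq> {?p}"
    using prime_dvd_CARD_eq_CHAR by (auto simp: prime_factors_dvd)
  then have "(\<Prod>r\<in>prime_factors ?q. r ^ multiplicity r ?q) = (\<Prod>r\<in>{?p}. r ^ multiplicity r ?q)"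
    by (intro prod.mono_neutral_left) (auto simp: in_prime_factors_iff not_dvd_imp_multiplicity_0 prime_CHAR_finite_field)
  then show ?thesis
    using prod_prime_factors[of ?q] by simp
qed

lemma CARD_eq_CHAR_power_ext_deg: "CARD('a::{finite,field}) = CHAR('a) ^ ext_deg TYPE('a)"
proof -
  have "ext_deg TYPE('a) = multiplicity CHAR('a) CARD('a)"
    unfolding ext_deg_def
    by (rule the_equality) (fact CARD_eq_CHAR_power,
       metis CARD_eq_CHAR_power CHAR_finite_field_gt_1 power_inject_exp)
  then show ?thesis using CARD_eq_CHAR_power by simp
qed

lemma ext_deg_pos: "ext_deg TYPE('a::{finite,field}) > 0"
proof -
  have "CARD('a) \<noteq> 1"
    using card_mono[of "UNIV :: 'a set" "{0, 1}"] by auto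
  then show ?thesis
    using CARD_eq_CHAR_power_ext_deg[where 'a='a] by (metis gr0I power_0)
qed

lemma power_card_eq_self: "(x::'a::{finite,field}) ^ CARD('a) = x"
proof (cases "x = 0")
  case False
  let ?U = "UNIV - {0::'a}"
  have "bij_betw (\<lambda>y. x * y) ?U ?U"
    by (rule bij_betwI[where g = "\<lambda>y. y / x"]) (use False in auto)
  then have "(\<Prod>y\<in>?U. x * y) = \<Prod>?U"
    by (rule prod.reindex_bij_betw)
  moreover have "(\<Prod>y\<in>?U. x * y) = x ^ card ?U * \<Prod>?U"
    by (simp add: prod.distrib)
  moreover have "\<Prod>?U \<noteq> 0" by simp
  ultimately have "x ^ card ?U = 1" by simp
  moreover have "CARD('a) = Suc (card ?U)"
    by (simp add: card_Diff_subset)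
  ultimately show ?thesis by (simp only: power_Suc mult_1_right)
qed (simp add: finite_UNIV_card_ge_0)

lemma of_nat_power_CHAR: "(of_nat j :: 'a::{finite,field}) ^ CHAR('a) = of_nat j"
proof (induction j)
  case (Suc j)
  have "(of_nat j + 1 :: 'a) ^ CHAR('a) = of_nat j ^ CHAR('a) + 1 ^ CHAR('a)"
    by (rule freshmans_dream[OF prime_CHAR_finite_field refl])
  then show ?case using Suc by (simp add: add.commute)
qed (use CHAR_finite_field_gt_1[where 'a='a] in simp)

text \<open>\<open>X\<^sup>p - X\<close> has at most \<open>p\<close> roots, and the \<open>p\<close> elements \<open>of_nat j\<close> are roots already.\<close>
lemma power_CHAR_eq_self_imp_of_nat:
  assumes "(y::'a::{finite,field}) ^ CHAR('a) = y"
  shows "\<exists>j<CHAR('a). of_nat j = y"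
proof (rule ccontr)
  assume "\<not> ?thesis"
  let ?p = "CHAR('a)"
  define Q :: "'a poly" where "Q = monom 1 ?p - [:0, 1:]"
  have "coeff Q ?p = 1"
    using CHAR_finite_field_gt_1[where 'a='a] by (simp add: Q_def coeff_monom coeff_pCons split: nat.split)
  then have "Q \<noteq> 0" by auto
  have "degree Q \<le> ?p"
    unfolding Q_def using CHAR_finite_field_gt_1[where 'a='a]
    by (intro degree_diff_le) (simp_all add: degree_monom_le)
  have roots: "insert y (of_nat ` {..<?p}) \<subseteq> {t. poly Q t = 0}"
    using assms of_nat_power_CHAR[where 'a='a] by (auto simp: Q_def poly_monom)
  have "inj_on (of_nat :: nat \<Rightarrow> 'a) {..<?p}"
    by (rule inj_onI) (auto intro: of_nat_inj_below_CHAR)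
  with \<open>\<not> ?thesis\<close> have "Suc ?p = card (insert y (of_nat ` {..<?p}))"
    by (subst card_insert_disjoint) (auto simp: card_image)
  also have "\<dots> \<le> card {t. poly Q t = 0}"
    by (rule card_mono[OF _ roots]) simp
  also have "\<dots> \<le> degree Q"
    by (rule card_poly_roots_bound[OF \<open>Q \<noteq> 0\<close>])
  finally show False using \<open>degree Q \<le> ?p\<close> by simp
qed

lemma trace_add: "trace (u + v) = trace u + trace (v::'a::{finite,field})"
  unfolding trace_def by (simp add: freshmans_dream'[OF prime_CHAR_finite_field refl] sum.distrib)

lemma trace_power_CHAR: "trace (a::'a::{finite,field}) ^ CHAR('a) = trace a"
proof -
  let ?p = "CHAR('a)" and ?m = "ext_deg TYPE('a)"
  have "trace a ^ ?p = (\<Sum>i<?m. a ^ (?p ^ Suc i))"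
    unfolding trace_def freshmans_dream_sum[OF prime_CHAR_finite_field refl]
    by (simp add: power_mult[symmetric] mult.commute)
  also have "\<dots> = (\<Sum>i<?m. a ^ (?p ^ i))"
  proof -
    have "a ^ (?p ^ ?m) = a ^ (?p ^ 0)"
      using power_card_eq_self[of a] by (simp flip: CARD_eq_CHAR_power_ext_deg)
    then show ?thesis
      using sum.lessThan_Suc_shift[of "\<lambda>i. a ^ (?p ^ i)" ?m] by (simp add: add.commute)
  qed
  finally show ?thesis unfolding trace_def .
qed

lemma tr_nat_eq_iff: "tr_nat (a::'a::{finite,field}) = j \<longleftrightarrow> j < CHAR('a) \<and> of_nat j = trace a"
proof -
  obtain i where i: "i < CHAR('a)" "of_nat i = trace a"
    using power_CHAR_eq_self_imp_of_nat[OF trace_power_CHAR] by blast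
  have "tr_nat a = i"
    unfolding tr_nat_def by (rule the_equality) (use i in \<open>auto intro: of_nat_inj_below_CHAR\<close>)
  then show ?thesis using i of_nat_inj_below_CHAR[where 'a='a] by metis
qed

lemma tr_nat_less_CHAR: "tr_nat (a::'a::{finite,field}) < CHAR('a)"
  using tr_nat_eq_iff by blast

lemma of_nat_tr_nat: "of_nat (tr_nat a) = trace (a::'a::{finite,field})"
  using tr_nat_eq_iff by blast

lemma tr_nat_add: "tr_nat (u + v::'a::{finite,field}) = (tr_nat u + tr_nat v) mod CHAR('a)"
  using CHAR_finite_field_gt_1[where 'a='a]
  by (simp add: tr_nat_eq_iff trace_add of_nat_mod_CHAR of_nat_tr_nat)

lemma tr_nat_zero: "tr_nat (0::'a::{finite,field}) = 0"
  using CHAR_finite_field_gt_1[where 'a='a]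
  by (simp add: tr_nat_eq_iff trace_def zero_power)

text \<open>The trace is a polynomial of degree \<open>p\<^sup>m\<^sup>-\<^sup>1 < q\<close>, so it cannot vanish on all of \<open>F\<^sub>q\<close>.\<close>
lemma trace_not_identically_zero: "\<exists>z::'a::{finite,field}. trace z \<noteq> 0"
proof (rule ccontr)
  assume "\<not> ?thesis"
  let ?p = "CHAR('a)" and ?m = "ext_deg TYPE('a)"
  define T :: "'a poly" where "T = (\<Sum>i<?m. monom 1 (?p ^ i))"
  have "poly T z = trace z" for z
    by (simp add: T_def trace_def poly_sum poly_monom)
  with \<open>\<not> ?thesis\<close> have roots: "{z. poly T z = 0} = UNIV" by auto
  have p: "?p > 1" and m: "?m > 0"
    using CHAR_finite_field_gt_1 ext_deg_pos by blast+
  have "coeff T (?p ^ (?m - 1)) = (\<Sum>i<?m. if i = ?m - 1 then 1 else 0)"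
    unfolding T_def coeff_sum coeff_monom by (rule sum.cong) (use p in auto)
  with m have "T \<noteq> 0" by auto
  have "degree T \<le> ?p ^ (?m - 1)"
    unfolding T_def
    by (rule degree_sum_le) (use p in \<open>auto intro: order.trans[OF degree_monom_le] power_increasing\<close>)
  moreover have "CARD('a) \<le> degree T"
    using card_poly_roots_bound[OF \<open>T \<noteq> 0\<close>] roots by simp
  moreover have "?p ^ (?m - 1) < ?p ^ ?m"
    using p m by (intro power_strict_increasing) auto
  ultimately show False using CARD_eq_CHAR_power_ext_deg[where 'a='a] by simp
qed

definition add_char :: "'a::{finite,field} \<Rightarrow> complex" where
  "add_char z = omega TYPE('a) ^ tr_nat z"

lemma omega_power: "omega TYPE('a::{finite,field}) ^ j = exp (2 * of_real pi * \<i> * of_nat j / of_nat CHAR('a))"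
  unfolding omega_def by (simp flip: exp_of_nat_mult add: field_simps)

lemma omega_power_mod_CHAR: "omega TYPE('a::{finite,field}) ^ (j mod CHAR('a)) = omega TYPE('a) ^ j"
  using complex_root_unity_eq[of "CHAR('a)" "j mod CHAR('a)" j] CHAR_finite_field_gt_1[where 'a='a]
  by (simp add: omega_power)

lemma omega_power_eq_1_iff: "omega TYPE('a::{finite,field}) ^ j = 1 \<longleftrightarrow> CHAR('a) dvd j"
  using complex_root_unity_eq_1[of "CHAR('a)" j] CHAR_finite_field_gt_1[where 'a='a]
  by (simp add: omega_power)

lemma add_char_add: "add_char (u + v) = add_char u * add_char (v::'a::{finite,field})"
  unfolding add_char_def tr_nat_add omega_power_mod_CHAR by (simp add: power_add)

lemma add_char_zero: "add_char (0::'a::{finite,field}) = 1"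
  unfolding add_char_def tr_nat_zero by simp

lemma cnj_add_char: "cnj (add_char u) = add_char (- u::'a::{finite,field})"
proof -
  have "norm (omega TYPE('a)) = 1"
    by (simp add: omega_def)
  then have "norm (add_char u) = 1"
    by (simp add: add_char_def norm_power)
  then have "cnj (add_char u) * add_char u = 1"
    using complex_norm_square[of "add_char u"] by (simp add: mult.commute)
  moreover have "add_char (- u) * add_char u = 1"
    by (simp flip: add_char_add add: add_char_zero)
  ultimately show ?thesis
    by (metis mult_cancel_right zero_neq_one mult_zero_left)
qed

lemma sum_add_char_mult:
  "(\<Sum>z\<in>UNIV. add_char (d * z)) = (if d = 0 then of_nat CARD('a) else 0)"
  for d :: "'a::{finite,field}"
proof (cases "d = 0")
  case False
  obtain z0 :: 'a where "trace z0 \<noteq> 0"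
    using trace_not_identically_zero by blast
  then have "\<not> CHAR('a) dvd tr_nat z0"
    using tr_nat_less_CHAR[of z0] of_nat_tr_nat[of z0] by (metis dvd_imp_le gr0I of_nat_0 not_less)
  then have ne1: "add_char z0 \<noteq> 1"
    by (simp add: add_char_def omega_power_eq_1_iff)
  define S where "S = (\<Sum>z\<in>UNIV. add_char (d * z))"
  have "S = (\<Sum>z\<in>UNIV. add_char (d * (z + z0 / d)))"
    unfolding S_def by (rule sum.reindex_bij_witness[of _ "\<lambda>z. z + z0 / d" "\<lambda>z. z - z0 / d"]) auto
  also have "\<dots> = S * add_char z0"
    using False by (simp add: S_def distrib_left add_char_add sum_distrib_right)
  finally have "S = 0"
    using ne1 by (metis mult.right_neutral mult_left_cancel)
  then show ?thesis using False S_def by simp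
qed (simp add: add_char_zero)

lemma sum_cnj_add_char_mult:
  "(\<Sum>z\<in>UNIV. cnj (add_char (u * z)) * add_char (v * z)) = (if u = v then of_nat CARD('a) else 0)"
  for u v :: "'a::{finite,field}"
proof -
  have "cnj (add_char (u * z)) * add_char (v * z) = add_char ((v - u) * z)" for z
    unfolding cnj_add_char add_char_add[symmetric] by (simp add: algebra_simps)
  then show ?thesis
    by (simp add: sum_add_char_mult)
qed

section \<open>Qudit states and circuits\<close>

lemma sum_apply: "(\<Sum>i\<in>A. f i) x = (\<Sum>i\<in>A. f i x)"
  by (induction A rule: infinite_finite_induct) auto

lemma cscale_apply [simp]: "cscale c \<psi> x = c * \<psi> x"
  by (simp add: cscale_def)

lemma ket_apply: "ket x y = (if y = x then 1 else 0)"
  by (simp add: ket_def)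

lemma qstate_expansion: "\<psi> = (\<Sum>x\<in>UNIV. cscale (\<psi> x) (ket x))"
  for \<psi> :: "('n::finite, 'a::finite) qstate"
proof
  fix y
  have "(\<Sum>x\<in>UNIV. cscale (\<psi> x) (ket x)) y = (\<Sum>x\<in>UNIV. if x = y then \<psi> y else 0)"
    unfolding sum_apply by (rule sum.cong) (auto simp: ket_apply)
  then show "\<psi> y = (\<Sum>x\<in>UNIV. cscale (\<psi> x) (ket x)) y" by simp
qed

interpretation qstate: finite_dimensional_vector_space
  "cscale :: complex \<Rightarrow> ('n::finite, 'a::finite) qstate \<Rightarrow> ('n, 'a) qstate" "range ket"
proof -
  interpret vector_space "cscale :: complex \<Rightarrow> ('n, 'a) qstate \<Rightarrow> ('n, 'a) qstate"
    by unfold_locales (auto simp: cscale_def fun_eq_iff algebra_simps)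
  show "finite_dimensional_vector_space (cscale :: complex \<Rightarrow> ('n, 'a) qstate \<Rightarrow> _) (range ket)"
  proof unfold_locales
    show "independent (range (ket :: ('n \<Rightarrow> 'a) \<Rightarrow> _))"
      unfolding independent_explicit_module
    proof (intro allI impI)
      fix t u v
      assume t: "finite t" "t \<subseteq> range (ket :: ('n \<Rightarrow> 'a) \<Rightarrow> _)"
        and sum0: "(\<Sum>v\<in>t. cscale (u v) v) = 0" and "v \<in> t"
      then obtain x where v: "v = ket x" by auto
      have "0 = (\<Sum>w\<in>t. cscale (u w) w) x"
        using sum0 by simp
      also have "\<dots> = (\<Sum>w\<in>t. if w = v then u w else 0)"
        unfolding sum_apply
      proof (rule sum.cong[OF refl])
        fix w assume "w \<in> t"
        then obtain y where "w = ket y" using t(2) by auto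
        moreover have "ket y = ket x \<longleftrightarrow> y = x"
          by (metis ket_apply zero_neq_one)
        ultimately show "cscale (u w) w x = (if w = v then u w else 0)"
          by (auto simp: v ket_apply)
      qed
      finally show "u v = 0"
        using t(1) \<open>v \<in> t\<close> by simp
    qed
    have "\<psi> \<in> span (range ket)" for \<psi> :: "('n, 'a) qstate"
    proof -
      have "(\<Sum>x\<in>UNIV. cscale (\<psi> x) (ket x)) \<in> span (range ket)"
        by (intro span_sum span_scale span_base) auto
      then show ?thesis
        using qstate_expansion[of \<psi>] by simp
    qed
    then show "span (range (ket :: ('n \<Rightarrow> 'a) \<Rightarrow> _)) = UNIV"
      by auto
  qed simp
qed

lemma apply_gate_apply: "apply_gate g \<psi> y = (\<Sum>x\<in>UNIV. \<psi> x * gate_ket g x y)"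
  unfolding apply_gate_def by (simp add: sum_apply)

lemma apply_gate_ket: "apply_gate g (ket x) = gate_ket g x"
proof
  fix y
  have "apply_gate g (ket x) y = (\<Sum>x'\<in>UNIV. if x' = x then gate_ket g x y else 0)"
    unfolding apply_gate_apply by (rule sum.cong) (auto simp: ket_apply)
  then show "apply_gate g (ket x) y = gate_ket g x y" by simp
qed

lemma linear_apply_gate: "Vector_Spaces.linear cscale cscale (apply_gate g)"
  unfolding Vector_Spaces.linear_iff
  by (auto simp: qstate.vector_space_axioms apply_gate_apply fun_eq_iff distrib_right sum.distrib
                 sum_distrib_left mult.assoc)

lemma linear_circuit_op: "Vector_Spaces.linear cscale cscale (circuit_op gs)"
proof (induction gs)
  case Nil
  show ?case
    unfolding circuit_op.simps by (rule qstate.linear_id)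
next
  case (Cons g gs)
  show ?case
    unfolding circuit_op.simps by (rule Vector_Spaces.linear_compose[OF linear_apply_gate Cons.IH])
qed

lemma circuit_op_append: "circuit_op (gs @ hs) = circuit_op hs \<circ> circuit_op gs"
  by (induction gs) auto

lemma qinner_sum_left: "qinner (\<Sum>i\<in>A. \<psi> i) \<phi> = (\<Sum>i\<in>A. qinner (\<psi> i) \<phi>)"
  unfolding qinner_def sum_apply by (simp add: sum_distrib_right sum.swap[of _ A])

lemma qinner_sum_right: "qinner \<phi> (\<Sum>i\<in>A. \<psi> i) = (\<Sum>i\<in>A. qinner \<phi> (\<psi> i))"
  unfolding qinner_def sum_apply by (simp add: sum_distrib_left sum.swap[of _ A])

lemma qinner_cscale_left: "qinner (cscale c \<psi>) \<phi> = cnj c * qinner \<psi> \<phi>"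
  unfolding qinner_def by (simp add: sum_distrib_left mult.assoc)

lemma qinner_cscale_right: "qinner \<psi> (cscale c \<phi>) = c * qinner \<psi> \<phi>"
  unfolding qinner_def by (simp add: sum_distrib_left mult.left_commute)

lemma qinner_sum_cscale:
  "qinner (\<Sum>i\<in>A. cscale (a i) (u i)) (\<Sum>j\<in>B. cscale (b j) (v j)) =
   (\<Sum>i\<in>A. \<Sum>j\<in>B. cnj (a i) * b j * qinner (u i) (v j))"
  by (subst qinner_sum_left) (simp add: qinner_cscale_left qinner_sum_right qinner_cscale_right mult_ac)

lemma qinner_ket: "qinner (ket x) (ket y) = (if x = y then 1 else 0)"
proof -
  have "qinner (ket x) (ket y) = (\<Sum>z\<in>UNIV. if z = x then (if x = y then 1 else 0) else 0)"
    unfolding qinner_def by (rule sum.cong) (auto simp: ket_apply)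
  then show ?thesis by simp
qed

lemma qinner_self_eq_0: "qinner \<psi> \<psi> = 0 \<Longrightarrow> \<psi> = 0"
proof -
  assume "qinner \<psi> \<psi> = 0"
  moreover have "qinner \<psi> \<psi> = of_real (\<Sum>x\<in>UNIV. (norm (\<psi> x))\<^sup>2)"
    unfolding qinner_def of_real_sum by (rule sum.cong[OF refl]) (simp only: complex_norm_square mult.commute)
  ultimately have "(\<Sum>x\<in>UNIV. (norm (\<psi> x))\<^sup>2) = 0"
    by (metis of_real_eq_0_iff)
  then show "\<psi> = 0"
    by (simp add: sum_nonneg_eq_0_iff fun_eq_iff)
qed

lemma qinner_apply_gate:
  assumes "\<And>x y. qinner (gate_ket g x) (gate_ket g y) = (if x = y then 1 else 0)"
  shows "qinner (apply_gate g \<psi>) (apply_gate g \<phi>) = qinner \<psi> \<phi>"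
proof -
  have "qinner (apply_gate g \<psi>) (apply_gate g \<phi>) =
        (\<Sum>x\<in>UNIV. \<Sum>y\<in>UNIV. if x = y then cnj (\<psi> x) * \<phi> y else 0)"
    unfolding apply_gate_def qinner_sum_cscale assms by (intro sum.cong) auto
  then show ?thesis
    by (simp add: qinner_def)
qed

lemma fun_upd_eq_fun_upd_iff: "x(a := z) = y(a := z') \<longleftrightarrow> z = z' \<and> (\<forall>j. j \<noteq> a \<longrightarrow> x j = y j)"
  by (auto simp: fun_eq_iff)

lemma qinner_gate_ket_FourierG:
  fixes x y :: "'n::finite \<Rightarrow> 'a::{finite,field}"
  shows "qinner (gate_ket (FourierG a) x) (gate_ket (FourierG a) y) = (if x = y then 1 else 0)"
proof -
  define c where "c = complex_of_real (sqrt (real CARD('a)))"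
  define B where "B \<longleftrightarrow> (\<forall>j. j \<noteq> a \<longrightarrow> x j = y j)"
  define f where "f z z' = cnj (add_char (x a * z) / c) * (add_char (y a * z') / c)" for z z'
  have gate_ket: "gate_ket (FourierG a) w = (\<Sum>z\<in>UNIV. cscale (add_char (w a * z) / c) (ket (w(a := z))))"
    for w :: "'n \<Rightarrow> 'a"
    by (simp add: add_char_def c_def)
  have "qinner (gate_ket (FourierG a) x) (gate_ket (FourierG a) y) =
      (\<Sum>z\<in>UNIV. \<Sum>z'\<in>UNIV. f z z' * (if z = z' \<and> B then 1 else 0))"
    unfolding gate_ket qinner_sum_cscale qinner_ket fun_upd_eq_fun_upd_iff B_def[symmetric] f_def ..
  also have "\<dots> = (\<Sum>z\<in>UNIV. if B then f z z else 0)"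
  proof (rule sum.cong[OF refl])
    fix z
    have "(\<Sum>z'\<in>UNIV. f z z' * (if z = z' \<and> B then 1 else 0)) =
          (\<Sum>z'\<in>UNIV. if z' = z then (if B then f z z else 0) else 0)"
      by (rule sum.cong) auto
    then show "(\<Sum>z'\<in>UNIV. f z z' * (if z = z' \<and> B then 1 else 0)) = (if B then f z z else 0)"
      by simp
  qed
  also have "\<dots> = (if B then (\<Sum>z\<in>UNIV. f z z) else 0)"
    by simp
  also have "\<dots> = (if B \<and> x a = y a then 1 else 0)"
  proof -
    have "f z z = cnj (add_char (x a * z)) * add_char (y a * z) / (cnj c * c)" for z
      by (simp add: f_def)
    moreover have "cnj c * c = of_nat CARD('a)"
      by (simp add: c_def flip: of_real_mult)
    ultimately have "(\<Sum>z\<in>UNIV. f z z) = (if x a = y a then 1 else 0)"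
      by (simp add: sum_cnj_add_char_mult flip: sum_divide_distrib)
    then show ?thesis by simp
  qed
  also have "\<dots> = (if x = y then 1 else 0)"
    unfolding B_def by (auto simp: fun_eq_iff)
  finally show ?thesis .
qed

text \<open>Action of the permutation gates on basis labels; the Fourier gate, which permutes nothing, is
  sent to the identity as a junk value.\<close>
fun basis_map :: "('n, 'a::field) gate \<Rightarrow> ('n \<Rightarrow> 'a) \<Rightarrow> ('n \<Rightarrow> 'a)" where
  "basis_map (MulG \<gamma> a) x = x(a := \<gamma> * x a)"
| "basis_map (AddG a b) x = x(b := x a + x b)"
| "basis_map (FourierG a) x = x"

lemma gate_ket_basis_map: "\<not> is_fourier g \<Longrightarrow> gate_ket g x = ket (basis_map g x)"
  by (cases g) auto

lemma inj_basis_map: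
  fixes g :: "('n, 'a::field) gate"
  shows "wf_gate g \<Longrightarrow> inj (basis_map g)"
proof (induction g rule: wf_gate.induct)
  case (1 \<gamma> a)
  show ?case
  proof (rule injI)
    fix x y
    assume "basis_map (MulG \<gamma> a) x = basis_map (MulG \<gamma> a) y"
    with 1 have "x a = y a" "\<forall>j. j \<noteq> a \<longrightarrow> x j = y j"
      by (simp_all add: fun_upd_eq_fun_upd_iff)
    then show "x = y"
      unfolding fun_eq_iff by metis
  qed
next
  case (3 a b)
  show ?case
  proof (rule injI)
    fix x y
    assume "basis_map (AddG a b) x = basis_map (AddG a b) y"
    then have "x a + x b = y a + y b" "\<forall>j. j \<noteq> b \<longrightarrow> x j = y j"
      by (simp_all add: fun_upd_eq_fun_upd_iff)
    moreover from this(2) 3 have "x a = y a"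
      by simp
    ultimately show "x = y"
      unfolding fun_eq_iff by (metis add_left_cancel)
  qed
qed (simp add: inj_on_def)

lemma qinner_gate_ket:
  fixes g :: "('n::finite, 'a::{finite,field}) gate"
  assumes "wf_gate g"
  shows "qinner (gate_ket g x) (gate_ket g y) = (if x = y then 1 else 0)"
proof (cases "is_fourier g")
  case True
  then obtain a where "g = FourierG a" by (cases g) auto
  then show ?thesis by (simp only: qinner_gate_ket_FourierG)
next
  case False
  then show ?thesis
    using inj_basis_map[OF assms] by (simp add: gate_ket_basis_map qinner_ket inj_eq)
qed

lemma qinner_circuit_op:
  fixes gs :: "('n::finite, 'a::{finite,field}) gate list"
  assumes "\<forall>g\<in>set gs. wf_gate g"
  shows "qinner (circuit_op gs \<psi>) (circuit_op gs \<phi>) = qinner \<psi> \<phi>"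
  using assms
  by (induction gs arbitrary: \<psi> \<phi>) (simp_all add: qinner_apply_gate qinner_gate_ket)

lemma unitary_circuit_op:
  fixes gs :: "('n::finite, 'a::{finite,field}) gate list"
  assumes "\<forall>g\<in>set gs. wf_gate g"
  shows "unitary_op (circuit_op gs)"
proof -
  have "inj (circuit_op gs)"
  proof (rule injI)
    fix \<psi> \<phi>
    assume eq: "circuit_op gs \<psi> = circuit_op gs \<phi>"
    have "circuit_op gs (\<psi> - \<phi>) = circuit_op gs \<psi> - circuit_op gs \<phi>"
      by (rule module_hom.diff[OF linear_circuit_op[folded module_hom_iff_linear]])
    then have "circuit_op gs (\<psi> - \<phi>) = 0"
      by (simp add: eq)
    then have "qinner (circuit_op gs (\<psi> - \<phi>)) (circuit_op gs (\<psi> - \<phi>)) = 0"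
      by (simp add: qinner_def)
    then have "\<psi> - \<phi> = 0"
      by (intro qinner_self_eq_0) (simp only: qinner_circuit_op[OF assms])
    then show "\<psi> = \<phi>"
      by simp
  qed
  then have "surj (circuit_op gs)"
    by (rule qstate.linear_inj_imp_surj[OF linear_circuit_op])
  then show ?thesis
    unfolding unitary_op_def using qinner_circuit_op[OF assms] by blast
qed

lemma circuit_op_ket_basis_map:
  assumes "\<forall>g\<in>set gs. \<not> is_fourier g"
  shows "circuit_op gs (ket x) = ket (fold basis_map gs x)"
  using assms
  by (induction gs arbitrary: x) (simp_all add: apply_gate_ket gate_ket_basis_map)

section \<open>Information sets of linear codes\<close>

interpretation fspace: vector_space "fscale :: 'a::field \<Rightarrow> ('n \<Rightarrow> 'a) \<Rightarrow> ('n \<Rightarrow> 'a)"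
  by unfold_locales (auto simp: fscale_def fun_eq_iff algebra_simps)

lemma fscale_apply [simp]: "fscale c v j = c * v j"
  by (simp add: fscale_def)

definition supported_on :: "'n set \<Rightarrow> ('n \<Rightarrow> 'a::zero) set" where
  "supported_on P = {a. \<forall>j. j \<notin> P \<longrightarrow> a j = 0}"

lemma card_supported_on:
  "card (supported_on P :: ('n::finite \<Rightarrow> 'a::{finite,zero}) set) = CARD('a) ^ card P"
proof -
  have "bij_betw (\<lambda>a. restrict a P) (supported_on P) (PiE P (\<lambda>_. UNIV :: 'a set))"
    by (rule bij_betw_byWitness[where f' = "\<lambda>e j. if j \<in> P then e j else 0"])
       (auto simp: supported_on_def fun_eq_iff PiE_def extensional_def)
  then show ?thesis
    by (simp add: bij_betw_same_card card_PiE)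
qed

definition free_coords :: "('n \<Rightarrow> 'a) set \<Rightarrow> 'n set \<Rightarrow> bool" where
  "free_coords V S \<longleftrightarrow> (\<forall>y. \<exists>v\<in>V. \<forall>s\<in>S. v s = y s)"

definition info_set :: "('n \<Rightarrow> 'a::zero) set \<Rightarrow> 'n set \<Rightarrow> bool" where
  "info_set V S \<longleftrightarrow> free_coords V S \<and> (\<forall>v\<in>V. (\<forall>s\<in>S. v s = 0) \<longrightarrow> v = 0)"

text \<open>The codeword that is the unit vector at \<open>s\<close> on \<open>S\<close>; a junk value unless \<open>free_coords V S\<close>.\<close>
definition sys_gen :: "('n::finite \<Rightarrow> 'a::{zero,one}) set \<Rightarrow> 'n set \<Rightarrow> 'n \<Rightarrow> 'n \<Rightarrow> 'a" where
  "sys_gen V S s = (SOME v. v \<in> V \<and> (\<forall>t\<in>S. v t = (if t = s then 1 else 0)))"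

lemma
  assumes "free_coords V S"
  shows sys_gen_mem: "sys_gen V S s \<in> V"
    and sys_gen_on_coords: "t \<in> S \<Longrightarrow> sys_gen V S s t = (if t = s then 1 else 0)"
proof -
  have "\<exists>v. v \<in> V \<and> (\<forall>t\<in>S. v t = (if t = s then 1 else 0))"
    using assms[unfolded free_coords_def, rule_format, of "\<lambda>t. if t = s then 1 else 0"] by blast
  from someI_ex[OF this] show "sys_gen V S s \<in> V" "t \<in> S \<Longrightarrow> sys_gen V S s t = (if t = s then 1 else 0)"
    unfolding sys_gen_def by auto
qed

lemma sum_sys_gen_apply:
  assumes "free_coords V S" "A \<subseteq> S" "t \<in> S"
  shows "(\<Sum>s\<in>A. fscale (c s) (sys_gen V S s)) t = (if t \<in> A then c t else 0)"
proof -
  have "(\<Sum>s\<in>A. fscale (c s) (sys_gen V S s)) t = (\<Sum>s\<in>A. if s = t then c s else 0)"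
    unfolding sum_apply using assms by (intro sum.cong) (auto simp: sys_gen_on_coords)
  then show ?thesis
    by simp
qed

context
  fixes V :: "('n::finite \<Rightarrow> 'a::{finite,field}) set"
  assumes lin: "linear_code V"
begin

lemma linear_code_sum_mem: "(\<And>s. s \<in> A \<Longrightarrow> f s \<in> V) \<Longrightarrow> (\<Sum>s\<in>A. fscale (c s) (f s)) \<in> V"
  using lin unfolding linear_code_def by (intro fspace.subspace_sum fspace.subspace_scale) auto

lemma free_coords_extend_info_set:
  "free_coords V P \<Longrightarrow> \<exists>S. P \<subseteq> S \<and> info_set V S"
proof (induction "card (- P)" arbitrary: P rule: less_induct)
  case less
  show ?case
  proof (cases "info_set V P")
    case False
    then obtain v j where v: "v \<in> V" "\<forall>s\<in>P. v s = 0" "v j \<noteq> 0"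
      using less.prems unfolding info_set_def by (auto simp: fun_eq_iff)
    then have "j \<notin> P" by auto
    have "free_coords V (insert j P)"
      unfolding free_coords_def
    proof
      fix y
      obtain u where u: "u \<in> V" "\<forall>s\<in>P. u s = y s"
        using less.prems unfolding free_coords_def by blast
      define w where "w = u + fscale ((y j - u j) / v j) v"
      have "w \<in> V"
        unfolding w_def using lin u(1) v(1) unfolding linear_code_def
        by (intro fspace.subspace_add fspace.subspace_scale) auto
      moreover have "\<forall>s\<in>insert j P. w s = y s"
        using u v by (auto simp: w_def)
      ultimately show "\<exists>w\<in>V. \<forall>s\<in>insert j P. w s = y s" by blast
    qed
    moreover have "card (- insert j P) < card (- P)"
      using \<open>j \<notin> P\<close> by (intro psubset_card_mono) auto
    ultimately show ?thesis
      using less.hyps by blast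
  qed blast
qed

lemma info_set_eqI:
  assumes "info_set V S" "x \<in> V" "y \<in> V" "\<forall>s\<in>S. x s = y s"
  shows "x = y"
proof -
  have "x - y \<in> V"
    using lin assms(2,3) unfolding linear_code_def by (rule fspace.subspace_diff)
  then show ?thesis
    using assms(1,4) unfolding info_set_def by auto
qed

lemma sys_gen_expansion:
  assumes "info_set V S" "v \<in> V"
  shows "v = (\<Sum>s\<in>S. fscale (v s) (sys_gen V S s))"
  using assms(1) unfolding info_set_def
  by (intro info_set_eqI[OF assms(1) assms(2)] linear_code_sum_mem) (auto simp: sys_gen_mem sum_sys_gen_apply)

lemma code_dim_eq_card_info_set:
  assumes "info_set V S"
  shows "code_dim V = card S"
proof -
  have free: "free_coords V S"
    using assms by (simp add: info_set_def)
  have inj: "inj_on (sys_gen V S) S"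
    by (rule inj_onI) (metis free sys_gen_on_coords zero_neq_one)
  have "fspace.independent (sys_gen V S ` S)"
  proof (rule fspace.independent_if_scalars_zero)
    fix f and x :: "'n \<Rightarrow> 'a"
    assume zero: "(\<Sum>x\<in>sys_gen V S ` S. fscale (f x) x) = 0" and "x \<in> sys_gen V S ` S"
    then obtain t where t: "t \<in> S" "x = sys_gen V S t" by auto
    have "0 = (\<Sum>s\<in>S. fscale (f (sys_gen V S s)) (sys_gen V S s)) t"
      using zero by (simp add: sum.reindex[OF inj])
    also have "\<dots> = f x"
      using free t by (simp add: sum_sys_gen_apply)
    finally show "f x = 0" ..
  qed simp
  moreover have "V \<subseteq> fspace.span (sys_gen V S ` S)"
  proof
    fix v assume "v \<in> V"
    then have "v = (\<Sum>s\<in>S. fscale (v s) (sys_gen V S s))"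
      by (rule sys_gen_expansion[OF assms])
    also have "\<dots> \<in> fspace.span (sys_gen V S ` S)"
      by (intro fspace.span_sum fspace.span_scale fspace.span_base) auto
    finally show "v \<in> fspace.span (sys_gen V S ` S)" .
  qed
  ultimately show ?thesis
    unfolding code_dim_def
    by (intro fspace.dim_unique[of "sys_gen V S ` S"]) (auto simp: sys_gen_mem[OF free] card_image[OF inj])
qed

lemma bij_betw_supported_on_code:
  assumes "info_set V S"
  shows "bij_betw (\<lambda>a. \<Sum>s\<in>S. fscale (a s) (sys_gen V S s)) (supported_on S) V"
proof (rule bij_betw_byWitness[where f' = "\<lambda>v j. if j \<in> S then v j else 0"])
  have free: "free_coords V S"
    using assms by (simp add: info_set_def)
  show "\<forall>a\<in>supported_on S. (\<lambda>j. if j \<in> S then (\<Sum>s\<in>S. fscale (a s) (sys_gen V S s)) j else 0) = a"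
    using free by (auto simp: fun_eq_iff supported_on_def sum_sys_gen_apply)
  show "\<forall>v\<in>V. (\<Sum>s\<in>S. fscale (if s \<in> S then v s else 0) (sys_gen V S s)) = v"
    using sys_gen_expansion[OF assms] by simp
  show "(\<lambda>a. \<Sum>s\<in>S. fscale (a s) (sys_gen V S s)) ` supported_on S \<subseteq> V"
    using free by (auto intro: linear_code_sum_mem sys_gen_mem)
qed (auto simp: supported_on_def)

end

lemma linear_code_dual_code: "linear_code (dual_code (C :: ('n::finite \<Rightarrow> 'a::{finite,field}) set))"
  unfolding linear_code_def fspace.subspace_def dual_code_def
  by (auto simp: distrib_right sum.distrib mult.assoc simp flip: sum_distrib_left)

lemma dual_code_mem_iff:
  fixes C :: "('n::finite \<Rightarrow> 'a::{finite,field}) set"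
  assumes lin: "linear_code C" and info: "info_set C S"
  shows "x \<in> dual_code C \<longleftrightarrow> (\<forall>s\<in>S. x s = - (\<Sum>j\<in>- S. x j * sys_gen C S s j))"
proof -
  let ?g = "sys_gen C S"
  have free: "free_coords C S"
    using info by (simp add: info_set_def)
  have split: "(\<Sum>j\<in>UNIV. x j * ?g s j) = x s + (\<Sum>j\<in>- S. x j * ?g s j)" if "s \<in> S" for s
  proof -
    have "(\<Sum>j\<in>UNIV. x j * ?g s j) = (\<Sum>j\<in>S. x j * ?g s j) + (\<Sum>j\<in>- S. x j * ?g s j)"
      by (subst sum.union_disjoint[symmetric]) (auto intro: sum.cong)
    also have "(\<Sum>j\<in>S. x j * ?g s j) = (\<Sum>j\<in>S. if j = s then x j else 0)"
      using free by (intro sum.cong) (auto simp: sys_gen_on_coords)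
    finally show ?thesis
      using that by simp
  qed
  show ?thesis
  proof
    assume "x \<in> dual_code C"
    then have orth: "(\<Sum>j\<in>UNIV. x j * ?g s j) = 0" for s
      using sys_gen_mem[OF free] unfolding dual_code_def by blast
    have "x s + (\<Sum>j\<in>- S. x j * ?g s j) = 0" if "s \<in> S" for s
      using split[OF that] orth[of s] by simp
    then show "\<forall>s\<in>S. x s = - (\<Sum>j\<in>- S. x j * ?g s j)"
      by (simp add: eq_neg_iff_add_eq_0)
  next
    assume orth: "\<forall>s\<in>S. x s = - (\<Sum>j\<in>- S. x j * ?g s j)"
    show "x \<in> dual_code C"
      unfolding dual_code_def
    proof (intro CollectI ballI)
      fix y assume "y \<in> C"
      then have "(\<Sum>j\<in>UNIV. x j * y j) = (\<Sum>j\<in>UNIV. x j * (\<Sum>s\<in>S. fscale (y s) (?g s)) j)"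
        by (subst sys_gen_expansion[OF lin info]) simp_all
      also have "\<dots> = (\<Sum>s\<in>S. y s * (\<Sum>j\<in>UNIV. x j * ?g s j))"
        by (simp add: sum_apply sum_distrib_left sum_distrib_right mult_ac sum.swap[of _ S])
      also have "\<dots> = 0"
        using orth split by simp
      finally show "(\<Sum>j\<in>UNIV. x j * y j) = 0" .
    qed
  qed
qed

lemma info_set_dual_code:
  fixes C :: "('n::finite \<Rightarrow> 'a::{finite,field}) set"
  assumes lin: "linear_code C" and info: "info_set C S"
  shows "info_set (dual_code C) (- S)"
proof -
  have "free_coords (dual_code C) (- S)"
    unfolding free_coords_def
  proof
    fix y
    define x where "x j = (if j \<in> S then - (\<Sum>t\<in>- S. y t * sys_gen C S j t) else y j)" for j
    have "x \<in> dual_code C"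
      unfolding dual_code_mem_iff[OF lin info] x_def by (auto intro!: sum.cong)
    then show "\<exists>x\<in>dual_code C. \<forall>s\<in>- S. x s = y s"
      by (rule bexI[rotated]) (simp add: x_def)
  qed
  moreover have "x = 0" if x: "x \<in> dual_code C" "\<forall>s\<in>- S. x s = 0" for x
  proof
    fix j
    show "x j = 0 j"
      using x by (cases "j \<in> S") (simp_all add: dual_code_mem_iff[OF lin info])
  qed
  ultimately show ?thesis
    unfolding info_set_def by blast
qed

section \<open>Reversible layers\<close>

text \<open>The control qudit \<open>s\<close> is kept at \<open>c \<cdot> x\<^sub>s\<close>: rescaling it by \<open>\<gamma>\<^sub>t / c\<close> before each addition adds
  \<open>\<gamma>\<^sub>t \<cdot> x\<^sub>s\<close> to \<open>x\<^sub>t\<close> at the cost of a single multiplication per target, plus one to restore \<open>x\<^sub>s\<close>.\<close>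
fun fanout_from :: "'a::field \<Rightarrow> 'n \<Rightarrow> ('n \<Rightarrow> 'a) \<Rightarrow> 'n list \<Rightarrow> ('n, 'a) gate list" where
  "fanout_from c s \<gamma> [] = [MulG (1 / c) s]"
| "fanout_from c s \<gamma> (t # ts) = MulG (\<gamma> t / c) s # AddG s t # fanout_from (\<gamma> t) s \<gamma> ts"

definition fanout :: "'n \<Rightarrow> ('n \<Rightarrow> 'a::field) \<Rightarrow> 'n list \<Rightarrow> ('n, 'a) gate list" where
  "fanout s \<gamma> ts = (if ts = [] then [] else fanout_from 1 s \<gamma> ts)"

lemma fold_basis_map_fanout_from:
  assumes "c \<noteq> 0" "\<forall>t\<in>set ts. \<gamma> t \<noteq> 0" "s \<notin> set ts" "distinct ts"
  shows "fold basis_map (fanout_from c s \<gamma> ts) (x(s := c * v)) =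
         (\<lambda>j. if j \<in> set ts then x j + \<gamma> j * v else x j)(s := v)"
  using assms
proof (induction ts arbitrary: c x)
  case (Cons t ts)
  then have "t \<noteq> s" by auto
  let ?x = "x(t := \<gamma> t * v + x t)"
  have "fold basis_map (fanout_from c s \<gamma> (t # ts)) (x(s := c * v)) =
        fold basis_map (fanout_from (\<gamma> t) s \<gamma> ts) (?x(s := \<gamma> t * v))"
    using Cons.prems \<open>t \<noteq> s\<close> by (simp add: fun_upd_twist)
  also have "\<dots> = (\<lambda>j. if j \<in> set ts then ?x j + \<gamma> j * v else ?x j)(s := v)"
    using Cons.prems by (intro Cons.IH) auto
  also have "\<dots> = (\<lambda>j. if j \<in> set (t # ts) then x j + \<gamma> j * v else x j)(s := v)"
    using Cons.prems by (auto simp: fun_eq_iff)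
  finally show ?case .
qed (auto simp: fun_eq_iff)

lemma fold_basis_map_fanout:
  assumes "\<forall>t\<in>set ts. \<gamma> t \<noteq> 0" "s \<notin> set ts" "distinct ts"
  shows "fold basis_map (fanout s \<gamma> ts) x = (\<lambda>j. if j \<in> set ts then x j + \<gamma> j * x s else x j)"
proof (cases "ts = []")
  case False
  have "fold basis_map (fanout s \<gamma> ts) x = fold basis_map (fanout_from 1 s \<gamma> ts) (x(s := 1 * x s))"
    using False by (simp add: fanout_def)
  also have "\<dots> = (\<lambda>j. if j \<in> set ts then x j + \<gamma> j * x s else x j)(s := x s)"
    using assms by (intro fold_basis_map_fanout_from) auto
  finally show ?thesis
    using assms(2) by (auto simp: fun_eq_iff)
qed (simp add: fanout_def)

lemma fanout_from_counts:
  "length (filter is_add (fanout_from c s \<gamma> ts)) = length ts"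
  "length (filter is_mul (fanout_from c s \<gamma> ts)) = Suc (length ts)"
  "filter is_fourier (fanout_from c s \<gamma> ts) = []"
  by (induction ts arbitrary: c) auto

lemma fanout_counts:
  "length (filter is_add (fanout s \<gamma> ts)) = length ts"
  "length (filter is_mul (fanout s \<gamma> ts)) = (if ts = [] then 0 else Suc (length ts))"
  "filter is_fourier (fanout s \<gamma> ts) = []"
  by (simp_all add: fanout_def fanout_from_counts)

lemma wf_fanout:
  assumes "\<forall>t\<in>set ts. \<gamma> t \<noteq> 0" "s \<notin> set ts"
  shows "\<forall>g\<in>set (fanout s \<gamma> ts). wf_gate g"
proof -
  have "\<forall>g\<in>set (fanout_from c s \<gamma> ts). wf_gate g" if "c \<noteq> 0" for c
    using assms that by (induction ts arbitrary: c) auto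
  from this[of 1] show ?thesis
    by (simp add: fanout_def)
qed

definition pivot_layer :: "('n \<Rightarrow> 'n \<Rightarrow> 'a::field) \<Rightarrow> 'n list \<Rightarrow> 'n list \<Rightarrow> ('n, 'a) gate list" where
  "pivot_layer G zs ss = concat (map (\<lambda>s. fanout s (G s) (filter (\<lambda>t. G s t \<noteq> 0) zs)) ss)"

lemma fold_basis_map_pivot_layer:
  fixes G :: "'n::finite \<Rightarrow> 'n \<Rightarrow> 'a::field"
  assumes "distinct ss" "distinct zs" "set ss \<inter> set zs = {}"
  shows "fold basis_map (pivot_layer G zs ss) x =
         x + (\<Sum>s\<in>set ss. fscale (x s) (\<lambda>j. if j \<in> set zs then G s j else 0))"
  using assms
proof (induction ss arbitrary: x)
  case (Cons s ss)
  define x' where "x' = x + fscale (x s) (\<lambda>j. if j \<in> set zs then G s j else 0)"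
  have "fold basis_map (fanout s (G s) (filter (\<lambda>t. G s t \<noteq> 0) zs)) x = x'"
    using Cons.prems by (subst fold_basis_map_fanout) (auto simp: x'_def fun_eq_iff)
  then have "fold basis_map (pivot_layer G zs (s # ss)) x = fold basis_map (pivot_layer G zs ss) x'"
    by (simp add: pivot_layer_def)
  also have "\<dots> = x' + (\<Sum>s'\<in>set ss. fscale (x' s') (\<lambda>j. if j \<in> set zs then G s' j else 0))"
    using Cons.prems by (intro Cons.IH) auto
  also have "(\<Sum>s'\<in>set ss. fscale (x' s') (\<lambda>j. if j \<in> set zs then G s' j else 0)) =
             (\<Sum>s'\<in>set ss. fscale (x s') (\<lambda>j. if j \<in> set zs then G s' j else 0))"
    using Cons.prems by (intro sum.cong) (auto simp: x'_def)
  finally show ?case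
    using Cons.prems by (simp add: x'_def add.assoc fscale_def)
qed (simp add: pivot_layer_def)

lemma pivot_layer_counts:
  "length (filter is_add (pivot_layer G zs ss)) \<le> length ss * length zs"
  "length (filter is_mul (pivot_layer G zs ss)) \<le>
     length (filter is_add (pivot_layer G zs ss)) + (if zs = [] then 0 else length ss)"
  "filter is_fourier (pivot_layer G zs ss) = []"
proof (induction ss)
  case (Cons s ss)
  let ?ts = "filter (\<lambda>t. G s t \<noteq> 0) zs"
  have add: "length (filter is_add (pivot_layer G zs (s # ss))) =
             length ?ts + length (filter is_add (pivot_layer G zs ss))"
    and mul: "length (filter is_mul (pivot_layer G zs (s # ss))) =
             (if ?ts = [] then 0 else Suc (length ?ts)) + length (filter is_mul (pivot_layer G zs ss))"
    by (simp_all add: pivot_layer_def fanout_counts)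
  show "length (filter is_add (pivot_layer G zs (s # ss))) \<le> length (s # ss) * length zs"
    unfolding add by (simp add: add_mono[OF length_filter_le Cons.IH(1)])
  show "length (filter is_mul (pivot_layer G zs (s # ss))) \<le>
          length (filter is_add (pivot_layer G zs (s # ss))) + (if zs = [] then 0 else length (s # ss))"
    unfolding add mul using Cons.IH(2) by auto
  show "filter is_fourier (pivot_layer G zs (s # ss)) = []"
    using Cons.IH(3) by (simp add: pivot_layer_def fanout_counts)
qed (simp_all add: pivot_layer_def)

lemma not_is_fourier_pivot_layer: "g \<in> set (pivot_layer G zs ss) \<Longrightarrow> \<not> is_fourier g"
  using pivot_layer_counts(3)[of G zs ss] unfolding filter_empty_conv by blast

lemma wf_pivot_layer:
  assumes "set ss \<inter> set zs = {}"
  shows "\<forall>g\<in>set (pivot_layer G zs ss). wf_gate g"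
proof -
  have "\<forall>g\<in>set (fanout s (G s) (filter (\<lambda>t. G s t \<noteq> 0) zs)). wf_gate g" if "s \<in> set ss" for s
    using assms that by (intro wf_fanout) auto
  then show ?thesis
    by (auto simp: pivot_layer_def)
qed

lemma fold_basis_map_pivot_layer_systematic:
  fixes G :: "'n::finite \<Rightarrow> 'n \<Rightarrow> 'a::field"
  assumes "distinct ss" "distinct zs" "set zs = - Z" "set ss \<subseteq> Z"
    and unit: "\<And>s t. s \<in> set ss \<Longrightarrow> t \<in> Z \<Longrightarrow> G s t = (if t = s then 1 else 0)"
    and y: "\<forall>s\<in>set ss. y s = 0" and c: "c \<in> supported_on (set ss)"
  shows "fold basis_map (pivot_layer G zs ss) (y + c) = y + (\<Sum>s\<in>set ss. fscale (c s) (G s))"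
proof -
  have "fold basis_map (pivot_layer G zs ss) (y + c) =
        y + c + (\<Sum>s\<in>set ss. fscale ((y + c) s) (\<lambda>j. if j \<in> set zs then G s j else 0))"
    using assms(1-4) by (intro fold_basis_map_pivot_layer) auto
  also have "\<dots> = y + (\<Sum>s\<in>set ss. fscale (c s) (G s))"
  proof
    fix j
    show "(y + c + (\<Sum>s\<in>set ss. fscale ((y + c) s) (\<lambda>j. if j \<in> set zs then G s j else 0))) j =
          (y + (\<Sum>s\<in>set ss. fscale (c s) (G s))) j"
    proof (cases "j \<in> Z")
      case True
      then have "(\<Sum>s\<in>set ss. c s * G s j) = (\<Sum>s\<in>set ss. if s = j then c s else 0)"
        using unit by (intro sum.cong) auto
      also have "\<dots> = c j"
        using c by (auto simp: supported_on_def)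
      finally show ?thesis
        using True assms(3) by (simp add: sum_apply)
    next
      case False
      then show ?thesis
        using c y assms(3,4) by (auto simp: sum_apply supported_on_def intro!: sum.cong)
    qed
  qed
  finally show ?thesis .
qed

lemma sum_supported_on_insert:
  fixes f :: "('n \<Rightarrow> 'a::{finite,zero}) \<Rightarrow> 'b::comm_monoid_add"
  assumes "p \<notin> P"
  shows "(\<Sum>a\<in>supported_on (insert p P). f a) = (\<Sum>z\<in>UNIV. \<Sum>a\<in>supported_on P. f (a(p := z)))"
proof -
  have "(\<Sum>z\<in>UNIV. \<Sum>a\<in>supported_on P. f (a(p := z))) = (\<Sum>(z, a)\<in>UNIV \<times> supported_on P. f (a(p := z)))"
    by (rule sum.cartesian_product)
  also have "\<dots> = (\<Sum>a\<in>supported_on (insert p P). f a)"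
    by (rule sum.reindex_bij_witness[where i = "\<lambda>a. (a p, a(p := 0))" and j = "\<lambda>(z, a). a(p := z)"])
       (use assms in \<open>auto simp: supported_on_def fun_eq_iff\<close>)
  finally show ?thesis ..
qed

lemma circuit_op_sum: "circuit_op gs (\<Sum>i\<in>A. \<psi> i) = (\<Sum>i\<in>A. circuit_op gs (\<psi> i))"
  by (rule module_hom.sum[OF linear_circuit_op[folded module_hom_iff_linear]])

lemma circuit_op_cscale: "circuit_op gs (cscale c \<psi>) = cscale c (circuit_op gs \<psi>)"
  by (rule module_hom.scale[OF linear_circuit_op[folded module_hom_iff_linear]])

lemma circuit_op_Fourier_layer:
  fixes x :: "'n::finite \<Rightarrow> 'a::{finite,field}"
  assumes "distinct ps" "\<forall>p\<in>set ps. x p = 0"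
  shows "circuit_op (map FourierG ps) (ket x) =
         cscale (1 / complex_of_real (sqrt (real (CARD('a) ^ length ps))))
           (\<Sum>a\<in>supported_on (set ps). ket (x + a))"
  using assms
proof (induction ps arbitrary: x)
  case Nil
  have "supported_on {} = {0 :: 'n \<Rightarrow> 'a}"
    by (auto simp: supported_on_def)
  then show ?case by (simp add: cscale_def)
next
  case (Cons p ps)
  define c where "c = 1 / complex_of_real (sqrt (real CARD('a)))"
  have "gate_ket (FourierG p) x = (\<Sum>z\<in>UNIV. cscale c (ket (x(p := z))))"
    using Cons.prems by (simp add: c_def tr_nat_zero)
  then have "circuit_op (map FourierG (p # ps)) (ket x) =
             (\<Sum>z\<in>UNIV. cscale c (circuit_op (map FourierG ps) (ket (x(p := z)))))"
    by (simp add: apply_gate_ket circuit_op_sum circuit_op_cscale)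
  also have "\<dots> = (\<Sum>z\<in>UNIV. cscale c (cscale (1 / complex_of_real (sqrt (real (CARD('a) ^ length ps))))
                     (\<Sum>a\<in>supported_on (set ps). ket (x + a(p := z)))))"
  proof (intro sum.cong refl arg_cong[where f = "cscale c"])
    fix z
    have "x(p := z) + a = x + a(p := z)" if "a \<in> supported_on (set ps)" for a
      using that Cons.prems by (auto simp: supported_on_def fun_eq_iff)
    then show "circuit_op (map FourierG ps) (ket (x(p := z))) =
        cscale (1 / complex_of_real (sqrt (real (CARD('a) ^ length ps)))) (\<Sum>a\<in>supported_on (set ps). ket (x + a(p := z)))"
      using Cons by (subst Cons.IH) (auto intro!: arg_cong[where f = "cscale _"] sum.cong)
  qed
  also have "\<dots> = cscale (c * (1 / complex_of_real (sqrt (real (CARD('a) ^ length ps)))))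
                     (\<Sum>z\<in>UNIV. \<Sum>a\<in>supported_on (set ps). ket (x + a(p := z)))"
    by (simp only: qstate.scale_scale qstate.scale_sum_right)
  also have "\<dots> = cscale (1 / complex_of_real (sqrt (real (CARD('a) ^ length (p # ps)))))
                     (\<Sum>a\<in>supported_on (set (p # ps)). ket (x + a))"
    using Cons.prems by (simp add: sum_supported_on_insert c_def real_sqrt_mult)
  finally show ?case .
qed

section \<open>The encoder\<close>

lemma add_gate_bound:
  fixes a b e :: nat
  shows "b * e + a * (b + e) \<le> (a + b) * (a + b + e) - ((a + b + 1) choose 2)"
proof -
  define D where "D = (a + b + 1) choose 2"
  have "2 * D = (a + b + 1) * (a + b)"
    by (simp add: D_def choose_two)
  then have "2 * (b * e + a * (b + e) + D) \<le> 2 * ((a + b) * (a + b + e))"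
    by (simp add: algebra_simps add_le_mono[OF le_square le_square])
  then show ?thesis
    unfolding D_def by simp
qed

definition distinct_list_of :: "'a set \<Rightarrow> 'a list" where
  "distinct_list_of A = (SOME xs. set xs = A \<and> distinct xs)"

lemma
  assumes "finite A"
  shows set_distinct_list_of: "set (distinct_list_of A) = A"
    and distinct_distinct_list_of: "distinct (distinct_list_of A)"
  using someI_ex[OF finite_distinct_list[OF assms]] by (simp_all add: distinct_list_of_def)

lemma length_distinct_list_of: "finite A \<Longrightarrow> length (distinct_list_of A) = card A"
  using distinct_card[OF distinct_distinct_list_of] set_distinct_list_of by metis

lemma card_Compl: "card (- A) = CARD('a::finite) - card (A :: 'a set)"
  by (simp add: Compl_eq_Diff_UNIV card_Diff_subset)

lemma distinct_list_of_eq_Nil_iff: "finite A \<Longrightarrow> distinct_list_of A = [] \<longleftrightarrow> A = {}"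
  by (metis set_distinct_list_of set_empty)

lemma css_state_add_dual:
  assumes "c \<in> dual_code C2"
  shows "css_state C2 (c + w) = css_state C2 w"
proof -
  have "(\<Sum>c'\<in>dual_code C2. ket (c' + (c + w))) = (\<Sum>c'\<in>dual_code C2. ket (c' + w))"
    using linear_code_dual_code[of C2] assms unfolding linear_code_def
    by (intro sum.reindex_bij_witness[where j = "\<lambda>c'. c' + c" and i = "\<lambda>c'. c' - c"])
       (auto simp: add.assoc intro: fspace.subspace_add fspace.subspace_diff)
  then show ?thesis
    by (simp add: css_state_def)
qed

locale css_encoder =
  fixes C1 C2 :: "('n::finite \<Rightarrow> 'a::{finite,field}) set" and P S :: "'n set"
  assumes lin1: "linear_code C1"
    and dual_subset: "dual_code C2 \<subseteq> C1"
    and info_P: "info_set (dual_code C2) P"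
    and P_subset: "P \<subseteq> S"
    and info_S: "info_set C1 S"
begin

abbreviation D where "D \<equiv> dual_code C2"

definition I where "I = S - P"

definition encode_word :: "('n \<Rightarrow> 'a) \<Rightarrow> ('n \<Rightarrow> 'a)" where
  "encode_word b = (\<Sum>i\<in>I. fscale (b i) (sys_gen C1 S i))"

definition encoder :: "('n, 'a) gate list" where
  "encoder = map FourierG (distinct_list_of P)
     @ pivot_layer (sys_gen C1 S) (distinct_list_of (- S)) (distinct_list_of I)
     @ pivot_layer (sys_gen D P) (distinct_list_of (- P)) (distinct_list_of P)"

lemma free_P: "free_coords D P" and free_S: "free_coords C1 S"
  using info_P info_S by (simp_all add: info_set_def)

lemma I_subset: "I \<subseteq> S" and I_disjoint: "I \<inter> P = {}"
  by (auto simp: I_def)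

lemma wf_encoder: "\<forall>g\<in>set encoder. wf_gate g"
proof -
  have "\<forall>g\<in>set (pivot_layer (sys_gen C1 S) (distinct_list_of (- S)) (distinct_list_of I)). wf_gate g"
    using I_subset by (intro wf_pivot_layer) (auto simp: set_distinct_list_of)
  moreover have "\<forall>g\<in>set (pivot_layer (sys_gen D P) (distinct_list_of (- P)) (distinct_list_of P)). wf_gate g"
    by (intro wf_pivot_layer) (auto simp: set_distinct_list_of)
  ultimately show ?thesis
    by (auto simp: encoder_def)
qed

lemma encode_word_mem: "encode_word b \<in> C1"
  unfolding encode_word_def by (intro linear_code_sum_mem[OF lin1] sys_gen_mem[OF free_S])

lemma encode_word_on_S: "t \<in> S \<Longrightarrow> encode_word b t = (if t \<in> I then b t else 0)"
  unfolding encode_word_def using free_S I_subset by (rule sum_sys_gen_apply)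

lemma fold_basis_map_pivot_layers:
  assumes b: "b \<in> supported_on I" and a: "a \<in> supported_on P"
  shows "fold basis_map (pivot_layer (sys_gen C1 S) (distinct_list_of (- S)) (distinct_list_of I)
           @ pivot_layer (sys_gen D P) (distinct_list_of (- P)) (distinct_list_of P)) (b + a) =
         encode_word b + (\<Sum>p\<in>P. fscale (a p) (sys_gen D P p))"
proof -
  have "fold basis_map (pivot_layer (sys_gen C1 S) (distinct_list_of (- S)) (distinct_list_of I)) (a + b) =
        a + encode_word b"
    unfolding encode_word_def
    using I_subset I_disjoint a b sys_gen_on_coords[OF free_S]
    by (subst fold_basis_map_pivot_layer_systematic[where Z = S])
       (auto simp: set_distinct_list_of distinct_distinct_list_of supported_on_def)
  moreover have "encode_word b t = 0" if "t \<in> P" for t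
  proof -
    have "t \<in> S" "t \<notin> I"
      using that P_subset I_disjoint by auto
    then show ?thesis by (simp add: encode_word_on_S)
  qed
  moreover have "fold basis_map (pivot_layer (sys_gen D P) (distinct_list_of (- P)) (distinct_list_of P))
                   (encode_word b + a) = encode_word b + (\<Sum>p\<in>P. fscale (a p) (sys_gen D P p))"
    using a sys_gen_on_coords[OF free_P] \<open>\<And>t. t \<in> P \<Longrightarrow> encode_word b t = 0\<close>
    by (subst fold_basis_map_pivot_layer_systematic[where Z = P])
       (auto simp: set_distinct_list_of distinct_distinct_list_of)
  ultimately show ?thesis
    by (simp add: add.commute)
qed

lemma card_dual_code: "card D = CARD('a) ^ card P"
  using bij_betw_same_card[OF bij_betw_supported_on_code[OF linear_code_dual_code info_P]]
  by (simp add: card_supported_on)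

lemma circuit_op_encoder_ket:
  assumes b: "b \<in> supported_on I"
  shows "circuit_op encoder (ket b) = css_state C2 (encode_word b)"
proof -
  let ?ps = "distinct_list_of P"
  let ?layers = "pivot_layer (sys_gen C1 S) (distinct_list_of (- S)) (distinct_list_of I)
                 @ pivot_layer (sys_gen D P) (distinct_list_of (- P)) ?ps"
  let ?\<kappa> = "1 / complex_of_real (sqrt (real (CARD('a) ^ card P)))"
  have "\<forall>p\<in>set ?ps. b p = 0"
    using b I_disjoint by (auto simp: set_distinct_list_of supported_on_def)
  moreover have "length ?ps = card P"
    using distinct_card[OF distinct_distinct_list_of[of P]] by (simp add: set_distinct_list_of)
  ultimately have "circuit_op (map FourierG ?ps) (ket b) = cscale ?\<kappa> (\<Sum>a\<in>supported_on P. ket (b + a))"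
    using circuit_op_Fourier_layer[of ?ps b] distinct_distinct_list_of[of P]
    by (simp add: set_distinct_list_of)
  moreover have "circuit_op ?layers (ket (b + a)) = ket (encode_word b + (\<Sum>p\<in>P. fscale (a p) (sys_gen D P p)))"
    if "a \<in> supported_on P" for a
  proof -
    have "\<forall>g\<in>set ?layers. \<not> is_fourier g"
      using not_is_fourier_pivot_layer by auto
    then show ?thesis
      using fold_basis_map_pivot_layers[OF b that] by (simp only: circuit_op_ket_basis_map)
  qed
  ultimately have "circuit_op encoder (ket b) =
      cscale ?\<kappa> (\<Sum>a\<in>supported_on P. ket ((\<Sum>p\<in>P. fscale (a p) (sys_gen D P p)) + encode_word b))"
    by (simp add: encoder_def circuit_op_append circuit_op_cscale circuit_op_sum add.commute)
  also have "\<dots> = cscale ?\<kappa> (\<Sum>c\<in>D. ket (c + encode_word b))"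
    using sum.reindex_bij_betw[OF bij_betw_supported_on_code[OF linear_code_dual_code info_P]] by simp
  finally show ?thesis
    by (simp add: css_state_def card_dual_code)
qed

lemma C1_decomposition:
  assumes "w \<in> C1"
  obtains c b where "c \<in> D" "b \<in> supported_on I" "w = c + encode_word b"
proof -
  define c where "c = (\<Sum>p\<in>P. fscale (w p) (sys_gen D P p))"
  have "c \<in> D"
    unfolding c_def by (intro linear_code_sum_mem[OF linear_code_dual_code] sys_gen_mem[OF free_P])
  define b where "b j = (if j \<in> I then w j - c j else 0)" for j
  have "b \<in> supported_on I"
    by (simp add: supported_on_def b_def)
  have "c t = w t" if "t \<in> P" for t
    unfolding c_def using free_P that by (simp add: sum_sys_gen_apply)
  then have "encode_word b = w - c"
    using lin1 assms \<open>c \<in> D\<close> dual_subset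
    by (intro info_set_eqI[OF lin1 info_S encode_word_mem])
       (auto simp: encode_word_on_S b_def I_def linear_code_def intro: fspace.subspace_diff)
  then show ?thesis
    using that \<open>c \<in> D\<close> \<open>b \<in> supported_on I\<close> by simp
qed

lemma circuit_op_encoder_image:
  "circuit_op encoder ` qspan (ket ` supported_on I) = css_code C1 C2"
proof -
  have "circuit_op encoder ` ket ` supported_on I = css_state C2 ` C1"
  proof
    show "circuit_op encoder ` ket ` supported_on I \<subseteq> css_state C2 ` C1"
      using circuit_op_encoder_ket encode_word_mem by auto
    show "css_state C2 ` C1 \<subseteq> circuit_op encoder ` ket ` supported_on I"
    proof
      fix \<psi> assume "\<psi> \<in> css_state C2 ` C1"
      then obtain w where "w \<in> C1" "\<psi> = css_state C2 w" by auto
      moreover obtain c b where "c \<in> D" "b \<in> supported_on I" "w = c + encode_word b"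
        using C1_decomposition[OF \<open>w \<in> C1\<close>] .
      ultimately have "\<psi> = circuit_op encoder (ket b)"
        by (simp add: css_state_add_dual circuit_op_encoder_ket)
      then show "\<psi> \<in> circuit_op encoder ` ket ` supported_on I"
        using \<open>b \<in> supported_on I\<close> by blast
    qed
  qed
  then show ?thesis
    unfolding qspan_def css_code_def
    using module_hom.span_image[OF linear_circuit_op[folded module_hom_iff_linear]] by metis
qed

lemma card_S: "card S = card P + card I"
  using P_subset card_mono[of S P] by (simp add: I_def card_Diff_subset)

lemma card_Compl_P: "card (- P) = card I + card (- S)"
proof -
  have "- P = I \<union> - S" "I \<inter> - S = {}"
    using P_subset by (auto simp: I_def)
  then show ?thesis by (simp add: card_Un_disjoint)
qed

lemma encoder_fourier_count: "length (filter is_fourier encoder) = card P"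
  by (simp add: encoder_def pivot_layer_counts(3) length_distinct_list_of o_def)

lemma encoder_add_count:
  "length (filter is_add encoder) \<le> card I * card (- S) + card P * card (- P)"
  using pivot_layer_counts(1)[of "sys_gen C1 S" "distinct_list_of (- S)" "distinct_list_of I"]
        pivot_layer_counts(1)[of "sys_gen D P" "distinct_list_of (- P)" "distinct_list_of P"]
  by (simp add: encoder_def length_distinct_list_of o_def)

lemma encoder_mul_count:
  "length (filter is_mul encoder) \<le> length (filter is_add encoder)
     + (if card (- S) = 0 then 0 else card I) + (if card (- P) = 0 then 0 else card P)"
proof -
  let ?L1 = "pivot_layer (sys_gen C1 S) (distinct_list_of (- S)) (distinct_list_of I)"
  let ?L2 = "pivot_layer (sys_gen D P) (distinct_list_of (- P)) (distinct_list_of P)"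
  have "distinct_list_of A = [] \<longleftrightarrow> card A = 0" "length (distinct_list_of A) = card A" for A :: "'n set"
    by (simp_all add: distinct_list_of_eq_Nil_iff length_distinct_list_of)
  then have "length (filter is_mul ?L1) \<le> length (filter is_add ?L1) + (if card (- S) = 0 then 0 else card I)"
    and "length (filter is_mul ?L2) \<le> length (filter is_add ?L2) + (if card (- P) = 0 then 0 else card P)"
    using pivot_layer_counts(2)[of "sys_gen C1 S" "distinct_list_of (- S)" "distinct_list_of I"]
          pivot_layer_counts(2)[of "sys_gen D P" "distinct_list_of (- P)" "distinct_list_of P"]
    by (simp_all only:)
  moreover have "length (filter is_mul encoder) = length (filter is_mul ?L1) + length (filter is_mul ?L2)"
    and "length (filter is_add encoder) = length (filter is_add ?L1) + length (filter is_add ?L2)"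
    by (simp_all add: encoder_def o_def)
  ultimately show ?thesis
    by linarith
qed

lemma card_UNIV_eq: "CARD('n) = card P + card I + card (- S)"
proof -
  have "card S \<le> CARD('n)"
    by (rule card_mono) simp_all
  then show ?thesis
    using card_Compl[of S] card_S by linarith
qed

lemma encoder_add_bound:
  "length (filter is_add encoder) \<le> card S * CARD('n) - ((card S + 1) choose 2)"
proof -
  have "length (filter is_add encoder) \<le> card I * card (- S) + card P * (card I + card (- S))"
    using encoder_add_count unfolding card_Compl_P .
  also have "\<dots> \<le> (card P + card I) * (card P + card I + card (- S)) - ((card P + card I + 1) choose 2)"
    by (rule add_gate_bound)
  also have "\<dots> = card S * CARD('n) - ((card S + 1) choose 2)"
    unfolding card_UNIV_eq card_S ..
  finally show ?thesis .
qed

lemma encoder_mul_bound: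
  "length (filter is_mul encoder) \<le> card S * CARD('n) - ((card S + 1) choose 2) + (CARD('n) - 1)"
proof -
  have overhead: "(if e = 0 then 0 else b) + (if b + e = 0 then 0 else a) \<le> a + b + e - 1" for a b e :: nat
    by auto
  have "(if card (- S) = 0 then 0 else card I) + (if card (- P) = 0 then 0 else card P) \<le> CARD('n) - 1"
    unfolding card_Compl_P card_UNIV_eq by (rule overhead)
  then show ?thesis
    using encoder_mul_count encoder_add_bound by linarith
qed

end

lemma css_encoder_exists:
  fixes C1 C2 :: "('n::finite \<Rightarrow> 'a::{finite,field}) set"
  assumes "linear_code C1" "linear_code C2" "dual_code C2 \<subseteq> C1"
  obtains S2 S where "info_set C2 S2" "css_encoder C1 C2 (- S2) S"
proof -
  have "free_coords C2 {}"
    using assms(2) unfolding free_coords_def linear_code_def by (blast intro: fspace.subspace_0)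
  then obtain S2 where S2: "info_set C2 S2"
    using free_coords_extend_info_set[OF assms(2)] by blast
  then have info: "info_set (dual_code C2) (- S2)"
    by (rule info_set_dual_code[OF assms(2)])
  then have "free_coords C1 (- S2)"
    using assms(3) unfolding info_set_def free_coords_def by blast
  then obtain S where "- S2 \<subseteq> S" "info_set C1 S"
    using free_coords_extend_info_set[OF assms(1)] by blast
  then show ?thesis
    using that S2 assms(1,3) info by (simp add: css_encoder_def)
qed

theorem proposition1:
  fixes C1 C2 :: "('n::finite \<Rightarrow> 'a::{finite,field}) set"
    and k1 k2 :: nat
  assumes "linear_code C1" and "linear_code C2"
    and "code_dim C1 = k1" and "code_dim C2 = k2"
    and "dual_code C2 \<subseteq> C1"
  shows "\<exists>(gs :: ('n, 'a) gate list) (I :: 'n set).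
           (let n = CARD('n); k = k1 + k2 - n; A = k1 * n - ((k1 + 1) choose 2) in
             card I = k \<and>
             (\<forall>g\<in>set gs. wf_gate g) \<and>
             unitary_op (circuit_op gs) \<and>
             circuit_op gs ` qspan {ket x | x. \<forall>j. j \<notin> I \<longrightarrow> x j = 0} = css_code C1 C2 \<and>
             length (filter is_fourier gs) = n - k2 \<and>
             length (filter is_add gs) \<le> A \<and>
             length (filter is_mul gs) \<le> A + (n - 1))"
proof -
  obtain S2 S where S2: "info_set C2 S2" and encoder: "css_encoder C1 C2 (- S2) S"
    using css_encoder_exists assms(1,2,5) by blast
  interpret css_encoder C1 C2 "- S2" S
    by (rule encoder)
  have "card S = k1" "card S2 = k2"
    using code_dim_eq_card_info_set[OF assms(1) info_S] code_dim_eq_card_info_set[OF assms(2) S2]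
          assms(3,4) by simp_all
  moreover have "card S2 \<le> CARD('n)"
    by (rule card_mono) simp_all
  ultimately have "card (- S2) = CARD('n) - k2" "card I = k1 + k2 - CARD('n)"
    using card_S by (simp_all add: card_Compl)
  moreover have kets: "{ket x | x. \<forall>j. j \<notin> I \<longrightarrow> x j = 0} = ket ` supported_on I"
    by (auto simp: supported_on_def)
  ultimately show ?thesis
    unfolding Let_def
    using wf_encoder unitary_circuit_op[OF wf_encoder] circuit_op_encoder_image encoder_fourier_count
          encoder_add_bound encoder_mul_bound \<open>card S = k1\<close>
    by (intro exI[of _ encoder] exI[of _ I]) (simp add: kets)
qed

end
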